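(* Let $A_1,A_2,A_3,A_4$ be four points in $\mathbb{R}^3$, and write $d_{ij}=|A_iA_j|$ and $\overrightarrow{d}_{ij}=\overrightarrow{A_iA_j}$. Consider the Cayley–Menger determinant $$D=\begin{vmatrix} 0&1&1&1&1\\ 1&0&d_{12}^2&d_{13}^2&d_{14}^2\\ 1&d_{12}^2&0&d_{23}^2&d_{24}^2\\ 1&d_{13}^2&d_{23}^2&0&d_{34}^2\\ 1&d_{14}^2&d_{24}^2&d_{34}^2&0\end{vmatrix}$$ as a polynomial in the six independent variables $d_{12}^2,d_{13}^2,d_{14}^2,d_{23}^2,d_{24}^2,d_{34}^2$. Then: (1) $\displaystyle \frac12\frac{\partial D}{\partial d_{13}^2}=-16\,\langle \overrightarrow{S}_{124},\overrightarrow{S}_{234}\rangle$, where $\overrightarrow{S}_{ijk}=\frac12\,\overrightarrow{d}_{ij}\times\overrightarrow{d}_{jk}$ and $\langle\cdot,\cdot\rangle$ is the standard scalar product of $\mathbb{R}^3$ (the partial derivative being evaluated at the actual squared distances of the four points). (2) If the four points are coplanar, then $\displaystyle \frac12\frac{\partial D}{\partial d_{13}^2}=-16\,S_{124}\,S_{234}$, where $S_{ijk}$ denotes the oriented area of the triangle $A_iA_jA_k$ in that plane (with respect to a fixed orientation of the plane).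
   Context: $\times$ is the cross product in $\mathbb{R}^3$. Oriented area: $S_{ijk}$ is the signed area of triangle $A_iA_jA_k$, so that e.g. $S_{ijk}=-S_{ikj}$ and $|S_{ijk}|=|\overrightarrow{S}_{ijk}|$. *)

theory Defs
  imports "HOL-Analysis.Analysis"
begin

definition cm_matrix :: "real \<Rightarrow> real \<Rightarrow> real \<Rightarrow> real \<Rightarrow> real \<Rightarrow> real \<Rightarrow> real^5^5" where
  "cm_matrix x12 x13 x14 x23 x24 x34 =
     vector [vector [0, 1, 1, 1, 1],
             vector [1, 0, x12, x13, x14],
             vector [1, x12, 0, x23, x24],
             vector [1, x13, x23, 0, x34],
             vector [1, x14, x24, x34, 0]]"

definition cayley_menger :: "real \<Rightarrow> real \<Rightarrow> real \<Rightarrow> real \<Rightarrow> real \<Rightarrow> real \<Rightarrow> real" where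
  "cayley_menger x12 x13 x14 x23 x24 x34 = det (cm_matrix x12 x13 x14 x23 x24 x34)"

definition vec_area :: "real^3 \<Rightarrow> real^3 \<Rightarrow> real^3 \<Rightarrow> real^3" where
  "vec_area Ai Aj Ak = (1/2) *\<^sub>R (cross3 (Aj - Ai) (Ak - Aj))"

text \<open>Oriented area of triangle with vertices P Q R of a plane, expressed in
  planar coordinates w.r.t. an ordered orthonormal frame (u,v) of the plane
  (the frame fixes the orientation).\<close>

definition oriented_area :: "real^3 \<Rightarrow> real^3 \<Rightarrow> real^3 \<Rightarrow> real^3 \<Rightarrow> real^3 \<Rightarrow> real" where
  "oriented_area u v P Q R =
     (1/2) * (((Q - P) \<bullet> u) * ((R - P) \<bullet> v) - ((R - P) \<bullet> u) * ((Q - P) \<bullet> v))"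

end

theory Submission
  imports Defs
begin

text \<open>Expanding the determinant, the partial derivative of the Cayley--Menger determinant with
  respect to \<open>d\<^sub>1\<^sub>3\<^sup>2\<close> is an explicit quadratic polynomial in the squared distances. Writing
  \<open>a = A\<^sub>2 - A\<^sub>1\<close>, \<open>b = A\<^sub>3 - A\<^sub>1\<close>, \<open>c = A\<^sub>4 - A\<^sub>1\<close> and expressing every squared distance through inner
  products of \<open>a, b, c\<close>, this polynomial becomes \<open>-8\<close> times the Lagrange expansion
  \<open>(x \<times> y) \<bullet> (z \<times> w) = (x \<bullet> z)(y \<bullet> w) - (x \<bullet> w)(y \<bullet> z)\<close> of \<open>(a \<times> (c - a)) \<bullet> ((b - a) \<times> (c - b))\<close>.
  In the coplanar case both vector areas are multiples of the unit normal \<open>u \<times> v\<close> of the plane,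
  the coefficients being the oriented areas.\<close>

lemma exhaust_5:
  fixes x :: 5
  shows "x = 1 \<or> x = 2 \<or> x = 3 \<or> x = 4 \<or> x = 5"
proof (induct x)
  case (of_int z)
  then have "z = 0 \<or> z = 1 \<or> z = 2 \<or> z = 3 \<or> z = 4" by fastforce
  then show ?case by auto
qed

lemma UNIV_5: "UNIV = {1, 2, 3, 4, 5::5}"
  using exhaust_5 by auto

lemma vector_5 [simp]:
  "(vector [a,b,c,d,e] :: ('a::zero)^5) $ 1 = a"
  "(vector [a,b,c,d,e] :: ('a::zero)^5) $ 2 = b"
  "(vector [a,b,c,d,e] :: ('a::zero)^5) $ 3 = c"
  "(vector [a,b,c,d,e] :: ('a::zero)^5) $ 4 = d"
  "(vector [a,b,c,d,e] :: ('a::zero)^5) $ 5 = e"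
  unfolding vector_def by simp_all

lemma cayley_menger_expand:
  "cayley_menger x12 x13 x14 x23 x24 x34 =
     - 2*x23*x24*x34 + 2*x14*x23*x34 + 2*x14*x23*x24 - 2*x14*x23\<^sup>2 - 2*x14\<^sup>2*x23
     + 2*x13*x24*x34 - 2*x13*x24\<^sup>2 + 2*x13*x23*x24 - 2*x13*x14*x34 + 2*x13*x14*x24
     + 2*x13*x14*x23 - 2*x13\<^sup>2*x24 - 2*x12*x34\<^sup>2 + 2*x12*x24*x34 + 2*x12*x23*x34
     + 2*x12*x14*x34 - 2*x12*x14*x24 + 2*x12*x14*x23 + 2*x12*x13*x34 + 2*x12*x13*x24
     - 2*x12*x13*x23 - 2*x12\<^sup>2*x34"
proof -
  have f1: "finite {2::5, 3, 4, 5}" "1 \<notin> {2::5, 3, 4, 5}" by auto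
  have f2: "finite {3::5, 4, 5}" "2 \<notin> {3::5, 4, 5}" by auto
  have f3: "finite {4::5, 5}" "3 \<notin> {4::5, 5}" by auto
  have f4: "finite {5::5}" "4 \<notin> {5::5}" by auto
  show ?thesis
    unfolding cayley_menger_def det_def UNIV_5
      sum_over_permutations_insert[OF f1] sum_over_permutations_insert[OF f2]
      sum_over_permutations_insert[OF f3] sum_over_permutations_insert[OF f4] permutes_sing
    by (simp add: cm_matrix_def sign_swap_id permutation_swap_id sign_compose
        permutation_compose sign_id swap_id_eq algebra_simps power2_eq_square)
qed

definition cayley_menger_partial13 :: "real \<Rightarrow> real \<Rightarrow> real \<Rightarrow> real \<Rightarrow> real \<Rightarrow> real \<Rightarrow> real" where
  "cayley_menger_partial13 x12 x13 x14 x23 x24 x34 =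
     2*x24*x34 - 2*x24\<^sup>2 + 2*x23*x24 - 2*x14*x34 + 2*x14*x24 + 2*x14*x23 - 4*x13*x24
     + 2*x12*x34 + 2*x12*x24 - 2*x12*x23"

lemma cayley_menger_has_real_derivative_x13:
  "((\<lambda>t. cayley_menger x12 t x14 x23 x24 x34) has_real_derivative
      cayley_menger_partial13 x12 x13 x14 x23 x24 x34) (at x13)"
  unfolding cayley_menger_expand cayley_menger_partial13_def
  by (auto intro!: derivative_eq_intros simp: algebra_simps power2_eq_square)

lemma inner_cross3_cross3:
  "cross3 x y \<bullet> cross3 z w = (x \<bullet> z) * (y \<bullet> w) - (x \<bullet> w) * (y \<bullet> z)"
  by (simp add: cross3_simps)

lemma cayley_menger_partial13_dist:
  fixes A1 A2 A3 A4 :: "real^3"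
  shows "cayley_menger_partial13 ((dist A1 A2)\<^sup>2) ((dist A1 A3)\<^sup>2) ((dist A1 A4)\<^sup>2)
           ((dist A2 A3)\<^sup>2) ((dist A2 A4)\<^sup>2) ((dist A3 A4)\<^sup>2)
         = - 32 * (vec_area A1 A2 A4 \<bullet> vec_area A2 A3 A4)"
proof -
  define a b c where "a = A2 - A1" and "b = A3 - A1" and "c = A4 - A1"
  then have points: "A2 = A1 + a" "A3 = A1 + b" "A4 = A1 + c" by simp_all
  have dist_sq: "(dist x y)\<^sup>2 = (x - y) \<bullet> (x - y)" for x y :: "real^3"
    by (simp add: dist_norm power2_norm_eq_inner)
  have "vec_area A1 A2 A4 \<bullet> vec_area A2 A3 A4
          = (1/4) * (cross3 a (c - a) \<bullet> cross3 (b - a) (c - b))"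
    unfolding vec_area_def points by simp
  then show ?thesis
    unfolding inner_cross3_cross3 dist_sq cayley_menger_partial13_def points
    by (simp add: inner_diff_left inner_diff_right inner_commute algebra_simps power2_eq_square)
qed

lemma span_pair_obtain:
  assumes "x \<in> span {u, v}"
  obtains p q where "x = p *\<^sub>R u + q *\<^sub>R v"
proof -
  obtain p q where "x - p *\<^sub>R u = q *\<^sub>R v"
    using assms by (auto simp: span_insert span_singleton)
  then show ?thesis
    using that by (metis add.commute diff_add_cancel)
qed

lemma vec_area_planar:
  fixes u v P Q R :: "real^3"
  assumes "u \<bullet> u = 1" "v \<bullet> v = 1" "u \<bullet> v = 0"
    and "Q - P \<in> span {u, v}" "R - P \<in> span {u, v}"
  shows "vec_area P Q R = oriented_area u v P Q R *\<^sub>R cross3 u v"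
proof -
  obtain p q where Q: "Q = P + (p *\<^sub>R u + q *\<^sub>R v)"
    using span_pair_obtain[OF assms(4)] by (metis add.commute diff_add_cancel)
  obtain r s where R: "R = P + (r *\<^sub>R u + s *\<^sub>R v)"
    using span_pair_obtain[OF assms(5)] by (metis add.commute diff_add_cancel)
  have "cross3 (Q - P) (R - Q) = (p * s - q * r) *\<^sub>R cross3 u v"
    unfolding Q R by (simp add: cross3_simps)
  moreover have "oriented_area u v P Q R = (p * s - q * r) / 2"
    using assms(1-3) unfolding oriented_area_def Q R
    by (simp add: inner_add_left inner_commute algebra_simps)
  ultimately show ?thesis
    by (simp add: vec_area_def)
qed

lemma inner_vec_area_planar:
  fixes u v A1 A2 A3 A4 :: "real^3"
  assumes "u \<bullet> u = 1" "v \<bullet> v = 1" "u \<bullet> v = 0"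
    and "\<forall>P\<in>{A1, A2, A3, A4}. P - A1 \<in> span {u, v}"
  shows "vec_area A1 A2 A4 \<bullet> vec_area A2 A3 A4
           = oriented_area u v A1 A2 A4 * oriented_area u v A2 A3 A4"
proof -
  have in_plane: "Q - P \<in> span {u, v}" if "P \<in> {A1, A2, A3, A4}" "Q \<in> {A1, A2, A3, A4}" for P Q
    using span_diff[of "Q - A1" "{u, v}" "P - A1"] that assms(4) by auto
  have "cross3 u v \<bullet> cross3 u v = 1"
    using assms(1-3) by (simp add: inner_cross3_cross3 inner_commute)
  then show ?thesis
    using assms(1-3)
    by (simp add: vec_area_planar in_plane)
qed

theorem theorem1:
  fixes A1 A2 A3 A4 :: "real^3"
  defines "d12 \<equiv> (dist A1 A2)\<^sup>2" and "d13 \<equiv> (dist A1 A3)\<^sup>2"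
      and "d14 \<equiv> (dist A1 A4)\<^sup>2" and "d23 \<equiv> (dist A2 A3)\<^sup>2"
      and "d24 \<equiv> (dist A2 A4)\<^sup>2" and "d34 \<equiv> (dist A3 A4)\<^sup>2"
  shows "((\<lambda>t. cayley_menger d12 t d14 d23 d24 d34) has_real_derivative
            2 * (- 16 * (vec_area A1 A2 A4 \<bullet> vec_area A2 A3 A4))) (at d13)
       \<and> (coplanar {A1, A2, A3, A4} \<longrightarrow>
          (\<forall>u v. u \<bullet> u = 1 \<and> v \<bullet> v = 1 \<and> u \<bullet> v = 0 \<and>
                 (\<forall>P\<in>{A1, A2, A3, A4}. P - A1 \<in> span {u, v}) \<longrightarrow>
            ((\<lambda>t. cayley_menger d12 t d14 d23 d24 d34) has_real_derivative
               2 * (- 16 * oriented_area u v A1 A2 A4 * oriented_area u v A2 A3 A4)) (at d13)))"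
proof -
  have deriv: "((\<lambda>t. cayley_menger d12 t d14 d23 d24 d34) has_real_derivative
                 2 * (- 16 * (vec_area A1 A2 A4 \<bullet> vec_area A2 A3 A4))) (at d13)"
    using cayley_menger_has_real_derivative_x13[of d12 d14 d23 d24 d34 d13]
    unfolding d12_def d13_def d14_def d23_def d24_def d34_def cayley_menger_partial13_dist
    by simp
  show ?thesis
    using deriv inner_vec_area_planar[of _ _ A1 A2 A3 A4] by auto
qed

end
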